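(* Let $M_\bullet=(M_n,\mathrm{tr}_n,e_{n+1})_{n\ge0}$ be a Markov tower of modulus $d$, and for $n\ge1$ let $E_{n+1}:M_{n+1}\to M_n$ be the trace-preserving conditional expectation. Then for all $n\ge1$: (1) the map $M_n\ni y\mapsto ye_n\in M_{n+1}$ is injective; (2) for all $x\in M_{n+1}$, $d^2E_{n+1}(xe_n)$ is the unique $y\in M_n$ with $xe_n=ye_n$; (3) $\mathrm{tr}_{n+1}(xe_n)=d^{-2}\mathrm{tr}_n(x)$ for all $x\in M_n$; (4) $e_nM_{n+1}e_n=M_{n-1}e_n$; (5) $X_{n+1}:=M_ne_nM_n$ (linear span) is a two-sided ideal of $M_{n+1}$, so $M_{n+1}=X_{n+1}\oplus Y_{n+1}$ as von Neumann algebras (set $X_0=X_1=(0)$, $Y_0=M_0$, $Y_1=M_1$); (6) $ae_nb\mapsto ap_nb$ defines a $*$-isomorphism from $X_{n+1}$ onto the Jones basic construction $\langle M_n,p_n\rangle=M_np_nM_n$ of $M_{n-1}\subset(M_n,\mathrm{tr}_n)$ acting on $L^2(M_n,\mathrm{tr}_n)$, where $p_n$ is the Jones projection; (7) under this isomorphism, the canonical trace $\mathrm{Tr}_{n+1}$ on $M_np_nM_n$ (with $\mathrm{Tr}_{n+1}(ap_nb)=\mathrm{tr}_n(ab)$) equals $d^2\mathrm{tr}_{n+1}|_{X_{n+1}}$; (8) if $y\in Y_{n+1}$ and $x\in X_n$ then $yx=0$ in $M_{n+1}$; hence $E_{n+1}(Y_{n+1})\subseteq Y_n$; (9) if $Y_n=(0)$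 then $Y_k=(0)$ for all $k\ge n$.
   Context: A Markov tower $M_\bullet=(M_n,\mathrm{tr}_n,e_{n+1})_{n\ge0}$ is a sequence of finite-dimensional von Neumann algebras with unital inclusions $M_n\subset M_{n+1}$, faithful tracial states with $\mathrm{tr}_{n+1}|_{M_n}=\mathrm{tr}_n$, and projections $e_n\in M_{n+1}$ ($n\ge1$) such that: (M1) $e_i=e_i^2=e_i^*$, $e_ie_j=e_je_i$ for $|i-j|>1$, and $e_ie_{i\pm1}e_i=d^{-2}e_i$ for a fixed $d>0$ (the modulus); (M2) $e_nxe_n=E_n(x)e_n$ for $x\in M_n$, where $E_n:M_n\to M_{n-1}$ is the trace-preserving conditional expectation; (M3) $E_{n+1}(e_n)=d^{-2}$; (M4) $M_{n+1}e_n=M_ne_n$. It is connected if $\dim M_0=1$. *)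

theory Defs
  imports Complex_Main
begin

text \<open>The Markov tower is realised inside an ambient complex unital *-algebra
  (e.g. its algebraic inductive limit), so that the unital inclusions
  M_n \<subseteq> M_(n+1) are literal set inclusions sharing the unit 1.\<close>

class complex_star_algebra = ring_1 +
  fixes cscale :: "complex \<Rightarrow> 'a \<Rightarrow> 'a"
    and astar :: "'a \<Rightarrow> 'a"
  assumes cscale_add_right: "cscale c (x + y) = cscale c x + cscale c y"
    and cscale_add_left: "cscale (b + c) x = cscale b x + cscale c x"
    and cscale_cscale: "cscale b (cscale c x) = cscale (b * c) x"
    and cscale_one: "cscale 1 x = x"
    and mult_cscale_left: "cscale c x * y = cscale c (x * y)"
    and mult_cscale_right: "x * cscale c y = cscale c (x * y)"
    and astar_astar: "astar (astar x) = x"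
    and astar_add: "astar (x + y) = astar x + astar y"
    and astar_mult: "astar (x * y) = astar y * astar x"
    and astar_cscale: "astar (cscale c x) = cscale (cnj c) (astar x)"

definition clin_span :: "'a::complex_star_algebra set \<Rightarrow> 'a set" where
  "clin_span S = {(\<Sum>i<k. cscale (c i) (v i)) | (k::nat) c v. \<forall>i<k. v i \<in> S}"

definition fd_star_subalg :: "'a::complex_star_algebra set \<Rightarrow> bool" where
  "fd_star_subalg A \<longleftrightarrow>
     (\<exists>B. finite B \<and> B \<subseteq> A \<and> A = clin_span B) \<and>
     1 \<in> A \<and>
     (\<forall>x\<in>A. \<forall>y\<in>A. x + y \<in> A \<and> x * y \<in> A) \<and>
     (\<forall>c. \<forall>x\<in>A. cscale c x \<in> A) \<and>
     (\<forall>x\<in>A. astar x \<in> A)"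

definition faithful_tracial_state ::
  "'a::complex_star_algebra set \<Rightarrow> ('a \<Rightarrow> complex) \<Rightarrow> bool" where
  "faithful_tracial_state A t \<longleftrightarrow>
     (\<forall>x\<in>A. \<forall>y\<in>A. t (x + y) = t x + t y) \<and>
     (\<forall>c. \<forall>x\<in>A. t (cscale c x) = c * t x) \<and>
     t 1 = 1 \<and>
     (\<forall>x\<in>A. \<forall>y\<in>A. t (x * y) = t (y * x)) \<and>
     (\<forall>x\<in>A. t (astar x * x) \<in> \<real> \<and> Re (t (astar x * x)) \<ge> 0) \<and>
     (\<forall>x\<in>A. x \<noteq> 0 \<longrightarrow> Re (t (astar x * x)) > 0)"

definition condexp ::
  "(nat \<Rightarrow> 'a::complex_star_algebra set) \<Rightarrow> (nat \<Rightarrow> 'a \<Rightarrow> complex) \<Rightarrow> nat \<Rightarrow> 'a \<Rightarrow> 'a" where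
  "condexp M tr n x =
     (THE y. y \<in> M (n - 1) \<and> (\<forall>b\<in>M (n - 1). tr n (b * y) = tr n (b * x)))"

text \<open>Markov tower of modulus d (axioms (M1)--(M4)); e 0 is unused.\<close>
definition markov_tower ::
  "(nat \<Rightarrow> 'a::complex_star_algebra set) \<Rightarrow> (nat \<Rightarrow> 'a \<Rightarrow> complex) \<Rightarrow> (nat \<Rightarrow> 'a) \<Rightarrow> real \<Rightarrow> bool" where
  "markov_tower M tr e d \<longleftrightarrow>
     d > 0 \<and>
     (\<forall>n. fd_star_subalg (M n)) \<and>
     (\<forall>n. M n \<subseteq> M (Suc n)) \<and>
     (\<forall>n. faithful_tracial_state (M n) (tr n)) \<and>
     (\<forall>n. \<forall>x\<in>M n. tr (Suc n) x = tr n x) \<and>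
     (\<forall>n\<ge>1. e n \<in> M (Suc n) \<and> e n * e n = e n \<and> astar (e n) = e n) \<and>
     (\<forall>i\<ge>1. \<forall>j\<ge>1. (i > j + 1 \<or> j > i + 1) \<longrightarrow> e i * e j = e j * e i) \<and>
     (\<forall>i\<ge>1. e i * e (Suc i) * e i = cscale (complex_of_real (1 / d\<^sup>2)) (e i) \<and>
             e (Suc i) * e i * e (Suc i) = cscale (complex_of_real (1 / d\<^sup>2)) (e (Suc i))) \<and>
     (\<forall>n\<ge>1. \<forall>x\<in>M n. e n * x * e n = condexp M tr n x * e n) \<and>
     (\<forall>n\<ge>1. condexp M tr (Suc n) (e n) = cscale (complex_of_real (1 / d\<^sup>2)) 1) \<and>
     (\<forall>n\<ge>1. {x * e n | x. x \<in> M (Suc n)} = {x * e n | x. x \<in> M n})"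

text \<open>X_0 = X_1 = (0); X_(n+1) = linear span of M_n e_n M_n for n \<ge> 1
  (scalars are absorbed into the left factors).\<close>
definition Xideal ::
  "(nat \<Rightarrow> 'a::complex_star_algebra set) \<Rightarrow> (nat \<Rightarrow> 'a) \<Rightarrow> nat \<Rightarrow> 'a set" where
  "Xideal M e k =
     (if k \<le> 1 then {0}
      else {(\<Sum>i<m. a i * e (k - 1) * b i) | (m::nat) a b.
              \<forall>i<m. a i \<in> M (k - 1) \<and> b i \<in> M (k - 1)})"

text \<open>Y_k: the complementary summand of X_k in M_k, i.e. its two-sided annihilator
  (so Y_0 = M_0, Y_1 = M_1).\<close>
definition Ycompl ::
  "(nat \<Rightarrow> 'a::complex_star_algebra set) \<Rightarrow> (nat \<Rightarrow> 'a) \<Rightarrow> nat \<Rightarrow> 'a set" where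
  "Ycompl M e k = {y \<in> M k. \<forall>x\<in>Xideal M e k. x * y = 0 \<and> y * x = 0}"

text \<open>Operators on L^2(M_n,tr_n) = M_n are represented as functions vanishing off M_n.\<close>
definition lmult :: "(nat \<Rightarrow> 'a::complex_star_algebra set) \<Rightarrow> nat \<Rightarrow> 'a \<Rightarrow> 'a \<Rightarrow> 'a" where
  "lmult M n a = (\<lambda>\<xi>. if \<xi> \<in> M n then a * \<xi> else 0)"

text \<open>Jones projection p_n: orthogonal projection of L^2(M_n) onto L^2(M_(n-1)).\<close>
definition jones_proj ::
  "(nat \<Rightarrow> 'a::complex_star_algebra set) \<Rightarrow> (nat \<Rightarrow> 'a \<Rightarrow> complex) \<Rightarrow> nat \<Rightarrow> 'a \<Rightarrow> 'a" where
  "jones_proj M tr n = (\<lambda>\<xi>. if \<xi> \<in> M n then condexp M tr n \<xi> else 0)"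

definition l2_inner :: "(nat \<Rightarrow> 'a::complex_star_algebra \<Rightarrow> complex) \<Rightarrow> nat \<Rightarrow> 'a \<Rightarrow> 'a \<Rightarrow> complex" where
  "l2_inner tr n \<xi> \<eta> = tr n (astar \<eta> * \<xi>)"

definition basic_op ::
  "(nat \<Rightarrow> 'a::complex_star_algebra set) \<Rightarrow> (nat \<Rightarrow> 'a \<Rightarrow> complex) \<Rightarrow> nat
    \<Rightarrow> nat \<Rightarrow> (nat \<Rightarrow> 'a) \<Rightarrow> (nat \<Rightarrow> 'a) \<Rightarrow> 'a \<Rightarrow> 'a" where
  "basic_op M tr n m a b =
     (\<lambda>\<xi>. \<Sum>i<m. (lmult M n (a i) \<circ> jones_proj M tr n \<circ> lmult M n (b i)) \<xi>)"

definition basic_constr ::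
  "(nat \<Rightarrow> 'a::complex_star_algebra set) \<Rightarrow> (nat \<Rightarrow> 'a \<Rightarrow> complex) \<Rightarrow> nat \<Rightarrow> ('a \<Rightarrow> 'a) set" where
  "basic_constr M tr n =
     {basic_op M tr n m a b | m a b. \<forall>i<m. a i \<in> M n \<and> b i \<in> M n}"

definition basic_trace ::
  "(nat \<Rightarrow> 'a::complex_star_algebra set) \<Rightarrow> (nat \<Rightarrow> 'a \<Rightarrow> complex) \<Rightarrow> nat \<Rightarrow> ('a \<Rightarrow> 'a) \<Rightarrow> complex" where
  "basic_trace M tr n T =
     (THE c. \<exists>(m::nat) a b. (\<forall>i<m. a i \<in> M n \<and> b i \<in> M n) \<and>
                     T = basic_op M tr n m a b \<and> c = (\<Sum>i<m. tr n (a i * b i)))"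

end

theory Submission
  imports Defs
begin

text \<open>By (M4) every x e_n with x in M_(n+1)
  equals y e_n with y in M_n, and since E_(n+1) is an M_n-bimodule map, (M3) gives
  E_(n+1) (y e_n) = d^-2 y; so y is recovered from y e_n, which yields (1)--(3), and (M2)
  yields (4). The span X_(n+1) of M_n e_n M_n is a finite-dimensional *-ideal; a faithful trace
  gives it a unit z (the orthogonal projection of 1), and m = m z + (m - m z) is the central
  decomposition (5). Letting x act on M_n by xi |-> d^2 E_(n+1) (x xi e_n) sends a e_n b to
  a p_n b; by (2) this action is multiplicative, and it is injective on X_(n+1) since u X_(n+1) = 0
  forces u u* = 0; (3) gives the trace formula. For (8), e_n = d^2 e_n e_(n+1) e_n gives
  X_n \<subseteq> X_(n+1). For (9), y in Y_(k+1) gives y* y in Y_(k+1), so E_(k+1) (y* y) lies in Y_k = 0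
  and faithfulness forces y = 0.\<close>

section \<open>Complex *-algebras, finite sums and linear spans\<close>

context complex_star_algebra
begin

lemmas [simp] = cscale_one

lemma cscale_zero_left [simp]: "cscale 0 x = 0"
  using cscale_add_left[of 0 0 x] by simp

lemma cscale_zero_right [simp]: "cscale c 0 = 0"
  using cscale_add_right[of c 0 0] by simp

lemma cscale_minus_one: "cscale (-1) x = - x"
  using cscale_add_left[of "-1" 1 x] by (simp add: eq_neg_iff_add_eq_0)

lemma astar_zero [simp]: "astar 0 = 0"
  using astar_add[of 0 0] by simp

lemma astar_one [simp]: "astar 1 = 1"
  using astar_mult[of "astar 1" 1] by (simp add: astar_astar)

lemma astar_minus: "astar (- x) = - astar x"
  using astar_add[of "- x" x] by (simp add: eq_neg_iff_add_eq_0)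

lemma astar_diff: "astar (x - y) = astar x - astar y"
  using astar_add[of x "- y"] by (simp add: astar_minus)

end

text \<open>Both clin_span and Xideal consist of finite sums of generators (see finsums_pairs),
  which gives them a common induction principle.\<close>
definition finsums :: "'a::comm_monoid_add set \<Rightarrow> 'a set" where
  "finsums G = {(\<Sum>i<m. g i) | (m::nat) g. \<forall>i<m. g i \<in> G}"

lemma finsums_zero [simp]: "0 \<in> finsums G"
  unfolding finsums_def by force

lemma finsums_snoc:
  assumes "x \<in> finsums G" "g \<in> G"
  shows "x + g \<in> finsums G"
proof -
  obtain m :: nat and h where x: "x = (\<Sum>i<m. h i)" and h: "\<forall>i<m. h i \<in> G"
    using assms(1) unfolding finsums_def by blast
  have "x + g = (\<Sum>i<Suc m. (h(m := g)) i)" by (simp add: x)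
  moreover have "\<forall>i<Suc m. (h(m := g)) i \<in> G" using h assms(2) by (auto simp: less_Suc_eq)
  ultimately show ?thesis unfolding finsums_def by blast
qed

lemma finsums_induct [consumes 1, case_names zero snoc]:
  assumes "x \<in> finsums G" "P 0"
    and "\<And>w g. w \<in> finsums G \<Longrightarrow> P w \<Longrightarrow> g \<in> G \<Longrightarrow> P (w + g)"
  shows "P x"
proof -
  obtain m :: nat and h where x: "x = (\<Sum>i<m. h i)" and h: "\<forall>i<m. h i \<in> G"
    using assms(1) unfolding finsums_def by blast
  have "(\<Sum>i<m. h i) \<in> finsums G \<and> P (\<Sum>i<m. h i)"
    using h
  proof (induction m)
    case 0
    then show ?case using assms(2) by simp
  next
    case (Suc m)
    then show ?case using assms(3) finsums_snoc[of "\<Sum>i<m. h i" G "h m"] by simp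
  qed
  then show ?thesis using x by simp
qed

lemma finsums_base: "g \<in> G \<Longrightarrow> g \<in> finsums G"
  using finsums_snoc[OF finsums_zero] by fastforce

lemma finsums_add:
  assumes "x \<in> finsums G" "y \<in> finsums G"
  shows "x + y \<in> finsums G"
  using assms(2)
proof (induction y rule: finsums_induct)
  case zero
  then show ?case using assms(1) by simp
next
  case (snoc w g)
  then show ?case using finsums_snoc[of "x + w" G g] by (simp add: add.assoc)
qed

lemma finsums_least:
  assumes "G \<subseteq> C" "0 \<in> C" "\<And>x y. x \<in> C \<Longrightarrow> y \<in> C \<Longrightarrow> x + y \<in> C"
  shows "finsums G \<subseteq> C"
proof
  fix x assume "x \<in> finsums G"
  then show "x \<in> C" by (induction x rule: finsums_induct) (use assms in auto)
qed

lemma finsums_additive_image: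
  assumes "x \<in> finsums G" "f 0 = 0" "\<And>x y. f (x + y) = f x + f y"
    and "\<And>g. g \<in> G \<Longrightarrow> f g \<in> finsums H"
  shows "f x \<in> finsums H"
  using assms(1) by (induction x rule: finsums_induct) (simp_all add: assms(2-4) finsums_add)

lemma finsums_pairs:
  "finsums {f a b | a b. a \<in> A \<and> b \<in> B} =
     {(\<Sum>i<m. f (a i) (b i)) | (m::nat) a b. \<forall>i<m. a i \<in> A \<and> b i \<in> B}"
proof (intro set_eqI iffI)
  fix x assume "x \<in> finsums {f a b | a b. a \<in> A \<and> b \<in> B}"
  then obtain m :: nat and g where x: "x = (\<Sum>i<m. g i)"
    and "\<forall>i<m. g i \<in> {f a b | a b. a \<in> A \<and> b \<in> B}"
    unfolding finsums_def by blast
  then have g: "\<forall>i\<in>{..<m}. \<exists>p. g i = f (fst p) (snd p) \<and> fst p \<in> A \<and> snd p \<in> B"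
    by fastforce
  obtain p where "\<forall>i\<in>{..<m}. g i = f (fst (p i)) (snd (p i)) \<and> fst (p i) \<in> A \<and> snd (p i) \<in> B"
    using bchoice[OF g] by blast
  then have "x = (\<Sum>i<m. f ((fst \<circ> p) i) ((snd \<circ> p) i)) \<and> (\<forall>i<m. (fst \<circ> p) i \<in> A \<and> (snd \<circ> p) i \<in> B)"
    unfolding x by auto
  then show "x \<in> {(\<Sum>i<m. f (a i) (b i)) | (m::nat) a b. \<forall>i<m. a i \<in> A \<and> b i \<in> B}"
    by blast
next
  fix x assume "x \<in> {(\<Sum>i<m. f (a i) (b i)) | (m::nat) a b. \<forall>i<m. a i \<in> A \<and> b i \<in> B}"
  then show "x \<in> finsums {f a b | a b. a \<in> A \<and> b \<in> B}"
    unfolding finsums_def by fastforce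
qed

lemma clin_span_eq_finsums: "clin_span S = finsums {cscale c s | c s. s \<in> S}"
  using finsums_pairs[of cscale UNIV S] unfolding clin_span_def by simp

lemma clin_span_zero [simp]: "0 \<in> clin_span S"
  by (simp add: clin_span_eq_finsums)

lemma clin_span_base:
  assumes "s \<in> S"
  shows "s \<in> clin_span S"
proof -
  have "cscale 1 s \<in> {cscale c s | c s. s \<in> S}" using assms by blast
  then show ?thesis unfolding clin_span_eq_finsums by (simp add: finsums_base)
qed

lemma clin_span_add: "u \<in> clin_span S \<Longrightarrow> v \<in> clin_span S \<Longrightarrow> u + v \<in> clin_span S"
  unfolding clin_span_eq_finsums by (rule finsums_add)

lemma clin_span_cscale:
  assumes "v \<in> clin_span S"
  shows "cscale c v \<in> clin_span S"
proof -
  have "cscale c (cscale c' s) \<in> finsums {cscale c s | c s. s \<in> S}" if "s \<in> S" for c' s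
    using that by (intro finsums_base) (auto simp: cscale_cscale)
  then show ?thesis
    using assms unfolding clin_span_eq_finsums
    by (elim finsums_additive_image) (auto simp: cscale_add_right)
qed

lemma clin_span_diff: "u \<in> clin_span S \<Longrightarrow> v \<in> clin_span S \<Longrightarrow> u - v \<in> clin_span S"
  using clin_span_add[of u S "cscale (-1) v"] clin_span_cscale[of v S "-1"]
  by (simp add: cscale_minus_one)

lemma clin_span_least:
  assumes "S \<subseteq> C" "0 \<in> C" "\<And>x y. x \<in> C \<Longrightarrow> y \<in> C \<Longrightarrow> x + y \<in> C"
    and "\<And>c x. x \<in> C \<Longrightarrow> cscale c x \<in> C"
  shows "clin_span S \<subseteq> C"
  unfolding clin_span_eq_finsums using assms by (intro finsums_least) auto

lemma clin_span_mono: "S \<subseteq> T \<Longrightarrow> clin_span S \<subseteq> clin_span T"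
  by (rule clin_span_least) (auto intro: clin_span_base clin_span_add clin_span_cscale)

lemma clin_span_linear_image:
  assumes "x \<in> clin_span S"
    and "\<And>x y. f (x + y) = f x + f y" "\<And>c x. f (cscale c x) = cscale c (f x)"
    and "\<And>s. s \<in> S \<Longrightarrow> f s \<in> clin_span T"
  shows "f x \<in> clin_span T"
proof -
  have "f 0 = 0" using assms(3)[of 0 0] by simp
  then show ?thesis
    using assms unfolding clin_span_eq_finsums
    by (elim finsums_additive_image) (auto simp: clin_span_eq_finsums[symmetric] clin_span_cscale)
qed

lemma clin_span_sandwich:
  assumes "a \<in> clin_span B" "b \<in> clin_span B"
  shows "a * u * b \<in> clin_span ((\<lambda>(s, s'). s * u * s') ` (B \<times> B))"
proof -
  let ?S = "(\<lambda>(s, s'). s * u * s') ` (B \<times> B)"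
  have "s * u * b \<in> clin_span ?S" if "s \<in> B" for s
    using assms(2) that
    by (elim clin_span_linear_image)
      (auto simp: distrib_left mult_cscale_right intro: clin_span_base)
  then show ?thesis
    using assms(1)
    by (elim clin_span_linear_image) (auto simp: distrib_right mult_cscale_left)
qed

section \<open>Finite-dimensional tracial *-algebras\<close>

definition star_ideal :: "'a::complex_star_algebra set \<Rightarrow> 'a set \<Rightarrow> bool" where
  "star_ideal A I \<longleftrightarrow>
     I \<subseteq> A \<and> 0 \<in> I \<and>
     (\<forall>x\<in>I. \<forall>y\<in>I. x + y \<in> I) \<and>
     (\<forall>c. \<forall>x\<in>I. cscale c x \<in> I) \<and>
     (\<forall>x\<in>I. \<forall>m\<in>A. m * x \<in> I \<and> x * m \<in> I) \<and>
     (\<forall>x\<in>I. astar x \<in> I)"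

locale fd_star_subalgebra =
  fixes A :: "'a::complex_star_algebra set"
  assumes fd_star_subalg: "fd_star_subalg A"
begin

lemma one_mem [simp]: "1 \<in> A"
  and add_mem [simp]: "x \<in> A \<Longrightarrow> y \<in> A \<Longrightarrow> x + y \<in> A"
  and mult_mem [simp]: "x \<in> A \<Longrightarrow> y \<in> A \<Longrightarrow> x * y \<in> A"
  and cscale_mem [simp]: "x \<in> A \<Longrightarrow> cscale c x \<in> A"
  and astar_mem [simp]: "x \<in> A \<Longrightarrow> astar x \<in> A"
  and finite_span: "\<exists>B. finite B \<and> B \<subseteq> A \<and> A = clin_span B"
  using fd_star_subalg unfolding fd_star_subalg_def by blast+

lemma zero_mem [simp]: "0 \<in> A"
  using cscale_mem[OF one_mem, of 0] by simp

lemma uminus_mem [simp]: "x \<in> A \<Longrightarrow> - x \<in> A"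
  using cscale_mem[of x "-1"] by (simp add: cscale_minus_one)

lemma diff_mem [simp]: "x \<in> A \<Longrightarrow> y \<in> A \<Longrightarrow> x - y \<in> A"
  using add_mem[of x "- y"] by simp

lemma sum_mem: "(\<And>i. i \<in> I \<Longrightarrow> f i \<in> A) \<Longrightarrow> sum f I \<in> A"
  by (induction I rule: infinite_finite_induct) auto

lemma clin_span_subset: "S \<subseteq> A \<Longrightarrow> clin_span S \<subseteq> A"
  by (rule clin_span_least) auto

lemma star_ideal_unit_decomposition:
  assumes I: "star_ideal A I" and z: "z \<in> I" "\<forall>x\<in>I. z * x = x \<and> x * z = x" and m: "m \<in> A"
  shows "\<exists>!p. fst p \<in> I \<and> snd p \<in> {y \<in> A. \<forall>x\<in>I. x * y = 0 \<and> y * x = 0} \<and> m = fst p + snd p"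
proof -
  have ideal: "I \<subseteq> A" "\<And>x m. x \<in> I \<Longrightarrow> m \<in> A \<Longrightarrow> m * x \<in> I \<and> x * m \<in> I"
    using I unfolding star_ideal_def by blast+
  have "m - m * z \<in> A" using m z(1) ideal(1) by auto
  moreover have "x * (m - m * z) = 0 \<and> (m - m * z) * x = 0" if "x \<in> I" for x
  proof -
    have "x * m * z = x * m" "z * x = x" using that z(2) ideal(2)[OF that m] by auto
    then show ?thesis by (simp add: right_diff_distrib left_diff_distrib mult.assoc)
  qed
  ultimately have exists: "m * z \<in> I \<and> m - m * z \<in> {y \<in> A. \<forall>x\<in>I. x * y = 0 \<and> y * x = 0}"
    using ideal(2)[OF z(1) m] by blast
  have "p = (m * z, m - m * z)"
    if p: "fst p \<in> I" "snd p \<in> {y \<in> A. \<forall>x\<in>I. x * y = 0 \<and> y * x = 0}" "m = fst p + snd p" for p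
  proof -
    have "m * z = fst p * z + snd p * z" using p(3) by (simp add: distrib_right)
    also have "\<dots> = fst p" using p(1,2) z by auto
    finally show ?thesis using p(3) by (auto simp: prod_eq_iff)
  qed
  then show ?thesis using exists by (intro ex1I[of _ "(m * z, m - m * z)"]) auto
qed

end

locale tracial_algebra = fd_star_subalgebra A for A :: "'a::complex_star_algebra set" +
  fixes t :: "'a \<Rightarrow> complex"
  assumes faithful_tracial_state: "faithful_tracial_state A t"
begin

lemma trace_add: "x \<in> A \<Longrightarrow> y \<in> A \<Longrightarrow> t (x + y) = t x + t y"
  and trace_cscale: "x \<in> A \<Longrightarrow> t (cscale c x) = c * t x"
  and trace_one: "t 1 = 1"
  and trace_commute: "x \<in> A \<Longrightarrow> y \<in> A \<Longrightarrow> t (x * y) = t (y * x)"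
  and trace_star_mult_real: "x \<in> A \<Longrightarrow> t (astar x * x) \<in> \<real>"
  using faithful_tracial_state unfolding faithful_tracial_state_def by blast+

lemma trace_faithful: "x \<in> A \<Longrightarrow> t (astar x * x) = 0 \<Longrightarrow> x = 0"
  using faithful_tracial_state unfolding faithful_tracial_state_def by fastforce

lemma trace_zero [simp]: "t 0 = 0"
  using trace_cscale[OF one_mem, of 0] by simp

lemma trace_diff: "x \<in> A \<Longrightarrow> y \<in> A \<Longrightarrow> t (x - y) = t x - t y"
  using trace_add[of x "- y"] trace_cscale[of y "-1"] by (simp add: cscale_minus_one)

lemma trace_sum: "(\<And>i. i \<in> I \<Longrightarrow> f i \<in> A) \<Longrightarrow> t (sum f I) = (\<Sum>i\<in>I. t (f i))"
  by (induction I rule: infinite_finite_induct) (simp_all add: trace_add sum_mem)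

text \<open>Reality of t on (1 + x)* (1 + x) and on (1 + i x)* (1 + i x) kills the imaginary
  part of t x + t x* and of i (t x - t x*).\<close>
lemma trace_astar:
  assumes x: "x \<in> A"
  shows "t (astar x) = cnj (t x)"
proof -
  have real_xx: "t (astar x * x) \<in> \<real>" using trace_star_mult_real x by simp
  have "astar (1 + x) * (1 + x) = 1 + x + astar x + astar x * x"
    by (simp add: astar_add algebra_simps)
  then have "t (astar (1 + x) * (1 + x)) = 1 + t x + t (astar x) + t (astar x * x)"
    using x by (simp add: trace_add trace_one)
  moreover have "t (astar (1 + x) * (1 + x)) \<in> \<real>" using trace_star_mult_real[of "1 + x"] x by simp
  ultimately have im: "Im (t x) + Im (t (astar x)) = 0"
    using real_xx by (simp add: complex_is_Real_iff)
  let ?y = "cscale \<i> x"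
  have "astar (1 + ?y) = 1 + cscale (-\<i>) (astar x)" by (simp add: astar_add astar_cscale)
  moreover have "cscale (-\<i>) (astar x) * ?y = astar x * x"
    by (simp add: mult_cscale_left mult_cscale_right cscale_cscale)
  ultimately have "astar (1 + ?y) * (1 + ?y) = 1 + ?y + cscale (-\<i>) (astar x) + astar x * x"
    by (simp add: algebra_simps)
  then have "t (astar (1 + ?y) * (1 + ?y)) = 1 + \<i> * t x - \<i> * t (astar x) + t (astar x * x)"
    using x by (simp add: trace_add trace_one trace_cscale)
  moreover have "t (astar (1 + ?y) * (1 + ?y)) \<in> \<real>" using trace_star_mult_real[of "1 + ?y"] x by simp
  ultimately have re: "Re (t x) - Re (t (astar x)) = 0"
    using real_xx by (simp add: complex_is_Real_iff)
  show ?thesis using im re by (intro complex_eqI) auto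
qed

lemma trace_orthogonal_clin_span:
  assumes S: "S \<subseteq> A" and w: "w \<in> A" and orth: "\<forall>s\<in>S. t (astar s * w) = 0"
    and v: "v \<in> clin_span S"
  shows "t (astar v * w) = 0"
proof -
  have "clin_span S \<subseteq> {v \<in> A. t (astar v * w) = 0}"
    using S w orth
    by (intro clin_span_least)
      (auto simp: astar_add astar_cscale distrib_right mult_cscale_left trace_add trace_cscale)
  then show ?thesis using v by blast
qed

text \<open>One Gram--Schmidt step: r = s - q is orthogonal to S, and p is corrected along r.\<close>
lemma orthogonal_projection_insert:
  assumes S: "S \<subseteq> A" and s: "s \<in> A" and x: "x \<in> A"
    and p: "p \<in> clin_span S" "\<forall>s'\<in>S. t (astar s' * (x - p)) = 0"
    and q: "q \<in> clin_span S" "\<forall>s'\<in>S. t (astar s' * (s - q)) = 0"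
  shows "\<exists>p'\<in>clin_span (insert s S). \<forall>s'\<in>insert s S. t (astar s' * (x - p')) = 0"
proof -
  have pA: "p \<in> A" and qA: "q \<in> A" using p(1) q(1) clin_span_subset[OF S] by auto
  define r where "r = s - q"
  define c where "c = t (astar r * (x - p)) / t (astar r * r)"
  define p' where "p' = p + cscale c r"
  have rA: "r \<in> A" using s qA by (simp add: r_def)
  have span_mono: "clin_span S \<subseteq> clin_span (insert s S)" by (rule clin_span_mono) auto
  have "r \<in> clin_span (insert s S)"
    unfolding r_def using clin_span_diff[OF clin_span_base subsetD[OF span_mono q(1)]] by simp
  then have p'_span: "p' \<in> clin_span (insert s S)"
    unfolding p'_def using p(1) span_mono by (intro clin_span_add clin_span_cscale) auto
  have inner: "t (astar v * (x - p')) = t (astar v * (x - p)) - c * t (astar v * r)"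
    if "v \<in> A" for v
  proof -
    have "astar v * (x - p') = astar v * (x - p) - cscale c (astar v * r)"
      by (simp add: p'_def algebra_simps mult_cscale_right)
    then show ?thesis using that x pA rA by (simp add: trace_diff trace_cscale)
  qed
  have orth_S: "\<forall>s'\<in>S. t (astar s' * (x - p')) = 0"
    using inner p(2) q(2) S by (auto simp: r_def)
  have x_p'A: "x - p' \<in> A" using x pA rA by (simp add: p'_def)
  have "t (astar q * (x - p')) = 0"
    using trace_orthogonal_clin_span[OF S x_p'A orth_S q(1)] .
  moreover have "t (astar r * (x - p')) = 0"
  proof (cases "r = 0")
    case False
    then have "t (astar r * r) \<noteq> 0" using trace_faithful rA by blast
    then show ?thesis using inner[OF rA] by (simp add: c_def)
  qed simp
  moreover have "astar s * (x - p') = astar r * (x - p') + astar q * (x - p')"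
    by (simp add: r_def astar_diff algebra_simps)
  ultimately have "t (astar s * (x - p')) = 0"
    using rA qA x_p'A by (simp add: trace_add)
  then show ?thesis using orth_S p'_span by blast
qed

lemma exists_orthogonal_projection:
  assumes "finite S" "S \<subseteq> A" "x \<in> A"
  shows "\<exists>p\<in>clin_span S. \<forall>s\<in>S. t (astar s * (x - p)) = 0"
  using assms
proof (induction S arbitrary: x rule: finite_induct)
  case empty
  show ?case using clin_span_zero by blast
next
  case (insert s S)
  have S: "S \<subseteq> A" and s: "s \<in> A" using insert.prems(1) by auto
  obtain p where "p \<in> clin_span S" "\<forall>s'\<in>S. t (astar s' * (x - p)) = 0"
    using insert.IH[OF S insert.prems(2)] by blast
  moreover obtain q where "q \<in> clin_span S" "\<forall>s'\<in>S. t (astar s' * (s - q)) = 0"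
    using insert.IH[OF S s] by blast
  ultimately show ?case using orthogonal_projection_insert[OF S s insert.prems(2)] by blast
qed

lemma ex1_conditional_expectation:
  assumes B: "fd_star_subalgebra B" "B \<subseteq> A" and x: "x \<in> A"
  shows "\<exists>!y. y \<in> B \<and> (\<forall>b\<in>B. t (b * y) = t (b * x))"
proof -
  interpret B: fd_star_subalgebra B by (fact B(1))
  obtain G where G: "finite G" "G \<subseteq> B" "B = clin_span G" using B.finite_span by blast
  have GA: "G \<subseteq> A" using G(2) B(2) by blast
  obtain p where p: "p \<in> clin_span G" "\<forall>g\<in>G. t (astar g * (x - p)) = 0"
    using exists_orthogonal_projection[OF G(1) GA x] by blast
  have pA: "p \<in> A" using p(1) G(3) B(2) by blast
  have "t (b * p) = t (b * x)" if b: "b \<in> B" for b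
  proof -
    have "astar b \<in> clin_span G" using B.astar_mem[OF b] G(3) by blast
    then have "t (astar (astar b) * (x - p)) = 0"
      using trace_orthogonal_clin_span[OF GA _ p(2)] x pA by simp
    moreover have "b \<in> A" using b B(2) by blast
    ultimately show ?thesis using x pA by (simp add: astar_astar right_diff_distrib trace_diff)
  qed
  moreover have "y = y'"
    if y: "y \<in> B" "\<forall>b\<in>B. t (b * y) = t (b * x)" and y': "y' \<in> B" "\<forall>b\<in>B. t (b * y') = t (b * x)"
    for y y'
  proof -
    have u: "astar (y - y') \<in> B" using y(1) y'(1) by simp
    have A: "y \<in> A" "y' \<in> A" "astar (y - y') \<in> A" using y(1) y'(1) u B(2) by auto
    have "t (astar (y - y') * (y - y')) = t (astar (y - y') * y) - t (astar (y - y') * y')"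
      using A by (simp add: right_diff_distrib trace_diff)
    also have "\<dots> = 0" using y(2) y'(2) u by simp
    finally show ?thesis using trace_faithful[of "y - y'"] A by simp
  qed
  ultimately show ?thesis using p(1) G(3) by blast
qed

text \<open>Faithfulness turns the trace condition into z being a right unit; applied to the
  adjoints it makes z* a left unit, and then z = z* z = z*.\<close>
lemma star_ideal_unit_of_trace_unit:
  assumes I: "star_ideal A I" and zI: "z \<in> I" and trace_unit: "\<And>w. w \<in> I \<Longrightarrow> t (w * z) = t w"
  shows "\<forall>x\<in>I. z * x = x \<and> x * z = x"
proof -
  have IA: "I \<subseteq> A" and add: "\<And>x y. x \<in> I \<Longrightarrow> y \<in> I \<Longrightarrow> x + y \<in> I"
    and scale: "\<And>c x. x \<in> I \<Longrightarrow> cscale c x \<in> I"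
    and mult: "\<And>x m. x \<in> I \<Longrightarrow> m \<in> A \<Longrightarrow> m * x \<in> I \<and> x * m \<in> I"
    and star: "\<And>x. x \<in> I \<Longrightarrow> astar x \<in> I"
    using I unfolding star_ideal_def by blast+
  have zA: "z \<in> A" using zI IA by blast
  have right: "x * z = x" if x: "x \<in> I" for x
  proof -
    define v where "v = x * z - x"
    have vI: "v \<in> I" using add[OF conjunct2[OF mult[OF x zA]] scale[OF x, of "-1"]]
      by (simp add: v_def cscale_minus_one)
    have vxI: "astar v * x \<in> I" using mult[OF x] star[OF vI] IA by blast
    have A: "x \<in> A" "v \<in> A" "astar v \<in> A" using x vI IA by auto
    have "t (astar v * v) = t (astar v * x * z) - t (astar v * x)"
      using A zA by (simp add: v_def right_diff_distrib trace_diff mult.assoc)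
    also have "\<dots> = 0" using trace_unit[OF vxI] by simp
    finally have "v = 0" using trace_faithful A by blast
    then show ?thesis by (simp add: v_def)
  qed
  have left: "astar z * x = x" if x: "x \<in> I" for x
  proof -
    have "astar (astar x * z) = astar (astar x)" using right[OF star[OF x]] by simp
    then show ?thesis by (simp add: astar_mult astar_astar)
  qed
  have "astar z = z" using right[OF star[OF zI]] left[OF zI] by simp
  then show ?thesis using left right by auto
qed

lemma star_ideal_has_unit:
  assumes I: "star_ideal A I" and S: "finite S" "S \<subseteq> I" "I \<subseteq> clin_span S"
  shows "\<exists>z\<in>I. \<forall>x\<in>I. z * x = x \<and> x * z = x"
proof -
  have IA: "I \<subseteq> A" and I0: "0 \<in> I" and add: "\<And>x y. x \<in> I \<Longrightarrow> y \<in> I \<Longrightarrow> x + y \<in> I"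
    and scale: "\<And>c x. x \<in> I \<Longrightarrow> cscale c x \<in> I" and star: "\<And>x. x \<in> I \<Longrightarrow> astar x \<in> I"
    using I unfolding star_ideal_def by blast+
  have SA: "S \<subseteq> A" using S(2) IA by blast
  obtain z where z: "z \<in> clin_span S" "\<forall>s\<in>S. t (astar s * (1 - z)) = 0"
    using exists_orthogonal_projection[OF S(1) SA one_mem] by blast
  have zI: "z \<in> I" using clin_span_least[OF S(2) I0 add scale] z(1) by blast
  have zA: "z \<in> A" using zI IA by blast
  have "t (w * z) = t w" if w: "w \<in> I" for w
  proof -
    have "astar w \<in> clin_span S" using star[OF w] S(3) by blast
    then have "t (astar (astar w) * (1 - z)) = 0"
      using trace_orthogonal_clin_span[OF SA _ z(2)] zA by simp
    moreover have "w \<in> A" using w IA by blast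
    ultimately show ?thesis using zA by (simp add: astar_astar right_diff_distrib trace_diff)
  qed
  then show ?thesis using star_ideal_unit_of_trace_unit[OF I zI] zI by blast
qed

end

section \<open>Markov towers and conditional expectations\<close>

locale markov_tower_setting =
  fixes M :: "nat \<Rightarrow> 'a::complex_star_algebra set" and tr :: "nat \<Rightarrow> 'a \<Rightarrow> complex"
    and e :: "nat \<Rightarrow> 'a" and d :: real
  assumes tower: "markov_tower M tr e d"
begin

abbreviation "E \<equiv> condexp M tr"
abbreviation "X \<equiv> Xideal M e"
abbreviation "Y \<equiv> Ycompl M e"
abbreviation "D \<equiv> complex_of_real (d\<^sup>2)"
abbreviation "\<delta> \<equiv> complex_of_real (1 / d\<^sup>2)"

lemma d_pos: "d > 0"
  using tower unfolding markov_tower_def by (elim conjE) blast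

text \<open>Stated in simp normal form, where complex_of_real (d^2) becomes (complex_of_real d)^2.\<close>
lemma cscale_dsq_cancel [simp]:
  "cscale ((complex_of_real d)\<^sup>2) (cscale (1 / (complex_of_real d)\<^sup>2) x) = x"
  "cscale (1 / (complex_of_real d)\<^sup>2) (cscale ((complex_of_real d)\<^sup>2) x) = x"
  using d_pos by (simp_all add: cscale_cscale)

lemma tracial_M: "tracial_algebra (M n) (tr n)"
  using tower
  unfolding markov_tower_def tracial_algebra_def fd_star_subalgebra_def tracial_algebra_axioms_def
  by (elim conjE) blast

lemma star_subalgebra_M: "fd_star_subalgebra (M n)"
  using tracial_M unfolding tracial_algebra_def by blast

lemmas M_one = fd_star_subalgebra.one_mem[OF star_subalgebra_M]
  and M_add = fd_star_subalgebra.add_mem[OF star_subalgebra_M]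
  and M_mult = fd_star_subalgebra.mult_mem[OF star_subalgebra_M]
  and M_cscale = fd_star_subalgebra.cscale_mem[OF star_subalgebra_M]
  and M_astar = fd_star_subalgebra.astar_mem[OF star_subalgebra_M]
  and M_zero = fd_star_subalgebra.zero_mem[OF star_subalgebra_M]
  and M_diff = fd_star_subalgebra.diff_mem[OF star_subalgebra_M]
lemmas [simp] = M_one M_add M_mult M_cscale M_astar M_zero M_diff

lemmas tr_cscale = tracial_algebra.trace_cscale[OF tracial_M]
  and tr_commute = tracial_algebra.trace_commute[OF tracial_M]
  and tr_faithful = tracial_algebra.trace_faithful[OF tracial_M]
  and tr_zero = tracial_algebra.trace_zero[OF tracial_M]
  and tr_sum = tracial_algebra.trace_sum[OF tracial_M]
  and tr_astar = tracial_algebra.trace_astar[OF tracial_M]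

lemma M_Suc: "x \<in> M n \<Longrightarrow> x \<in> M (Suc n)"
  using tower unfolding markov_tower_def by (elim conjE) blast

lemma M_pred: "x \<in> M (k - 1) \<Longrightarrow> x \<in> M k"
  using M_Suc by (cases k) auto

lemma tr_Suc: "x \<in> M n \<Longrightarrow> tr (Suc n) x = tr n x"
  using tower unfolding markov_tower_def by (elim conjE) blast

lemma e_mem: "n \<ge> 1 \<Longrightarrow> e n \<in> M (Suc n)"
  and e_self_adjoint: "n \<ge> 1 \<Longrightarrow> astar (e n) = e n"
  and e_e_Suc_e: "n \<ge> 1 \<Longrightarrow> e n * e (Suc n) * e n = cscale \<delta> (e n)"
  and e_compress: "n \<ge> 1 \<Longrightarrow> x \<in> M n \<Longrightarrow> e n * x * e n = E n x * e n"
  and condexp_e: "n \<ge> 1 \<Longrightarrow> E (Suc n) (e n) = cscale \<delta> 1"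
proof -
  note T = tower[unfolded markov_tower_def]
  show "n \<ge> 1 \<Longrightarrow> e n \<in> M (Suc n)" using T by (elim conjE) blast
  show "n \<ge> 1 \<Longrightarrow> astar (e n) = e n" using T by (elim conjE) blast
  show "n \<ge> 1 \<Longrightarrow> e n * e (Suc n) * e n = cscale \<delta> (e n)" using T by (elim conjE) simp
  show "n \<ge> 1 \<Longrightarrow> x \<in> M n \<Longrightarrow> e n * x * e n = E n x * e n" using T by (elim conjE) simp
  show "n \<ge> 1 \<Longrightarrow> E (Suc n) (e n) = cscale \<delta> 1" using T by (elim conjE) simp
qed

lemma mult_e_absorb:
  assumes n: "n \<ge> 1" and x: "x \<in> M (Suc n)"
  obtains y where "y \<in> M n" "x * e n = y * e n"
proof -
  have "\<forall>n\<ge>1. {x * e n | x. x \<in> M (Suc n)} = {x * e n | x. x \<in> M n}"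
    using tower unfolding markov_tower_def by (elim conjE)
  then have eq: "{x * e n | x. x \<in> M (Suc n)} = {x * e n | x. x \<in> M n}" using n by blast
  have "x * e n \<in> {x * e n | x. x \<in> M (Suc n)}" using x by blast
  then have "x * e n \<in> {x * e n | x. x \<in> M n}" by (simp only: eq)
  then show ?thesis using that by blast
qed

lemma e_mult_absorb:
  assumes n: "n \<ge> 1" and x: "x \<in> M (Suc n)"
  obtains y where "y \<in> M n" "e n * x = e n * y"
proof -
  obtain y where y: "y \<in> M n" "astar x * e n = y * e n"
    using mult_e_absorb[OF n M_astar[OF x]] by blast
  have "e n * x = astar (astar x * e n)" by (simp add: astar_mult astar_astar e_self_adjoint[OF n])
  also have "\<dots> = e n * astar y" by (simp add: y(2) astar_mult e_self_adjoint[OF n])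
  finally show ?thesis using that M_astar[OF y(1)] by blast
qed

lemma ex1_condexp:
  assumes "x \<in> M k"
  shows "\<exists>!y. y \<in> M (k - 1) \<and> (\<forall>b\<in>M (k - 1). tr k (b * y) = tr k (b * x))"
  using tracial_algebra.ex1_conditional_expectation[OF tracial_M star_subalgebra_M _ assms] M_pred
  by blast

lemma condexp_mem: "x \<in> M k \<Longrightarrow> E k x \<in> M (k - 1)"
  and condexp_trace: "x \<in> M k \<Longrightarrow> b \<in> M (k - 1) \<Longrightarrow> tr k (b * E k x) = tr k (b * x)"
  unfolding condexp_def using theI'[OF ex1_condexp] by blast+

lemma condexp_eqI:
  assumes "x \<in> M k" "y \<in> M (k - 1)" "\<And>b. b \<in> M (k - 1) \<Longrightarrow> tr k (b * y) = tr k (b * x)"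
  shows "E k x = y"
  using ex1_condexp[OF assms(1)] condexp_mem[OF assms(1)] condexp_trace[OF assms(1)] assms(2,3)
  by blast

lemma condexp_id: "y \<in> M (k - 1) \<Longrightarrow> E k y = y"
  by (rule condexp_eqI) (auto intro: M_pred)

lemma trace_condexp: "x \<in> M k \<Longrightarrow> tr k (E k x) = tr k x"
  using condexp_trace[of x k 1] by simp

lemma condexp_mult_left:
  assumes a: "a \<in> M (k - 1)" and x: "x \<in> M k"
  shows "E k (a * x) = a * E k x"
proof (rule condexp_eqI)
  show "a * x \<in> M k" "a * E k x \<in> M (k - 1)" using a x condexp_mem[OF x] M_pred by auto
  show "tr k (b * (a * E k x)) = tr k (b * (a * x))" if "b \<in> M (k - 1)" for b
    using condexp_trace[OF x, of "b * a"] that a by (simp add: mult.assoc)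
qed

lemma condexp_mult_right:
  assumes a: "a \<in> M (k - 1)" and x: "x \<in> M k"
  shows "E k (x * a) = E k x * a"
proof (rule condexp_eqI)
  show "x * a \<in> M k" "E k x * a \<in> M (k - 1)" using a x condexp_mem[OF x] M_pred by auto
  show "tr k (b * (E k x * a)) = tr k (b * (x * a))" if b: "b \<in> M (k - 1)" for b
  proof -
    have in_M: "a \<in> M k" "b \<in> M k" "E k x \<in> M k" using a b condexp_mem[OF x] M_pred by auto
    have "tr k (b * (E k x * a)) = tr k (a * b * E k x)"
      using tr_commute[of "b * E k x" k a] in_M by (simp add: mult.assoc)
    also have "\<dots> = tr k (a * b * x)" using condexp_trace[OF x] a b by simp
    also have "\<dots> = tr k (b * (x * a))"
      using tr_commute[of a k "b * x"] in_M x by (simp add: mult.assoc)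
    finally show ?thesis .
  qed
qed

lemma condexp_zero [simp]: "E k 0 = 0"
  using condexp_id[of 0 k] by simp

lemma condexp_mult_e:
  assumes n: "n \<ge> 1" and y: "y \<in> M n"
  shows "E (Suc n) (y * e n) = cscale \<delta> y"
proof -
  have "E (Suc n) (y * e n) = y * E (Suc n) (e n)"
    using condexp_mult_left[of y "Suc n" "e n"] y e_mem[OF n] by simp
  then show ?thesis using condexp_e[OF n] by (simp add: mult_cscale_right)
qed

lemma inj_on_mult_e:
  assumes n: "n \<ge> 1"
  shows "inj_on (\<lambda>y. y * e n) (M n)"
proof (rule inj_onI)
  fix y y' assume y: "y \<in> M n" "y' \<in> M n" and eq: "y * e n = y' * e n"
  have "cscale \<delta> y = cscale \<delta> y'"
    using condexp_mult_e[OF n y(1)] condexp_mult_e[OF n y(2)] eq by simp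
  then have "cscale D (cscale \<delta> y) = cscale D (cscale \<delta> y')" by simp
  then show "y = y'" by simp
qed

lemma condexp_mult_e_representative:
  assumes n: "n \<ge> 1" and x: "x \<in> M (Suc n)"
  shows "cscale D (E (Suc n) (x * e n)) \<in> M n \<and>
    x * e n = cscale D (E (Suc n) (x * e n)) * e n \<and>
    (\<forall>y\<in>M n. x * e n = y * e n \<longrightarrow> y = cscale D (E (Suc n) (x * e n)))"
proof -
  obtain y where y: "y \<in> M n" "x * e n = y * e n" using mult_e_absorb[OF n x] .
  have y_eq: "cscale D (E (Suc n) (x * e n)) = y" using condexp_mult_e[OF n y(1)] y(2) by simp
  have "y' = y" if "y' \<in> M n" "x * e n = y' * e n" for y'
    using inj_onD[OF inj_on_mult_e[OF n], of y' y] that y by simp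
  then show ?thesis unfolding y_eq using y by blast
qed

lemma trace_mult_e:
  assumes n: "n \<ge> 1" and x: "x \<in> M n"
  shows "tr (Suc n) (x * e n) = \<delta> * tr n x"
proof -
  have xe: "x * e n \<in> M (Suc n)" using M_Suc[OF x] e_mem[OF n] by simp
  have "tr (Suc n) (x * e n) = tr (Suc n) (E (Suc n) (x * e n))" using trace_condexp[OF xe] by simp
  also have "\<dots> = tr (Suc n) (cscale \<delta> x)" using condexp_mult_e[OF n x] by simp
  also have "\<dots> = \<delta> * tr n x" using tr_cscale[OF M_Suc[OF x]] tr_Suc[OF x] by simp
  finally show ?thesis .
qed

lemma e_compress_eq:
  assumes n: "n \<ge> 1"
  shows "{e n * x * e n | x. x \<in> M (Suc n)} = {y * e n | y. y \<in> M (n - 1)}"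
proof (intro set_eqI iffI)
  fix z assume "z \<in> {e n * x * e n | x. x \<in> M (Suc n)}"
  then obtain x where x: "x \<in> M (Suc n)" "z = e n * x * e n" by blast
  obtain y where y: "y \<in> M n" "x * e n = y * e n" using mult_e_absorb[OF n x(1)] .
  have "z = e n * y * e n" using x(2) y(2) by (simp add: mult.assoc)
  also have "\<dots> = E n y * e n" using e_compress[OF n y(1)] .
  finally show "z \<in> {y * e n | y. y \<in> M (n - 1)}" using condexp_mem[OF y(1)] by blast
next
  fix z assume "z \<in> {y * e n | y. y \<in> M (n - 1)}"
  then obtain y where y: "y \<in> M (n - 1)" "z = y * e n" by blast
  have yn: "y \<in> M n" using M_pred[OF y(1)] .
  have "e n * y * e n = z" using e_compress[OF n yn] condexp_id[OF y(1)] y(2) by simp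
  then show "z \<in> {e n * x * e n | x. x \<in> M (Suc n)}" using M_Suc[OF yn] by blast
qed

section \<open>The ideal X_(n+1) and the central decomposition\<close>

lemma Xideal_Suc_sums:
  "n \<ge> 1 \<Longrightarrow>
    X (Suc n) = {(\<Sum>i<m. a i * e n * b i) | (m::nat) a b. \<forall>i<m. a i \<in> M n \<and> b i \<in> M n}"
  by (simp add: Xideal_def)

lemma Xideal_Suc:
  assumes "n \<ge> 1"
  shows "X (Suc n) = finsums {a * e n * b | a b. a \<in> M n \<and> b \<in> M n}"
  using Xideal_Suc_sums[OF assms] finsums_pairs[of "\<lambda>a b. a * e n * b" "M n" "M n"] by simp

lemma Xideal_Suc_generator:
  assumes "n \<ge> 1" "a \<in> M n" "b \<in> M n"
  shows "a * e n * b \<in> X (Suc n)"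
  unfolding Xideal_Suc[OF assms(1)] using assms(2,3) by (intro finsums_base) blast

lemma Xideal_Suc_subset:
  assumes n: "n \<ge> 1"
  shows "X (Suc n) \<subseteq> M (Suc n)"
  unfolding Xideal_Suc[OF n] using M_Suc e_mem[OF n] by (intro finsums_least) auto

lemma Xideal_Suc_mult_left:
  assumes n: "n \<ge> 1" and m: "m \<in> M (Suc n)" and x: "x \<in> X (Suc n)"
  shows "m * x \<in> X (Suc n)"
proof -
  have "m * (a * e n * b) \<in> X (Suc n)" if ab: "a \<in> M n" "b \<in> M n" for a b
  proof -
    obtain a' where a': "a' \<in> M n" "m * a * e n = a' * e n"
      using mult_e_absorb[OF n, of "m * a"] m M_Suc[OF ab(1)] by auto
    then have "m * (a * e n * b) = a' * e n * b" by (metis mult.assoc)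
    then show ?thesis using Xideal_Suc_generator[OF n a'(1) ab(2)] by simp
  qed
  then show ?thesis
    using x unfolding Xideal_Suc[OF n]
    by (elim finsums_additive_image) (auto simp: distrib_left)
qed

lemma Xideal_Suc_mult_right:
  assumes n: "n \<ge> 1" and m: "m \<in> M (Suc n)" and x: "x \<in> X (Suc n)"
  shows "x * m \<in> X (Suc n)"
proof -
  have "a * e n * b * m \<in> X (Suc n)" if ab: "a \<in> M n" "b \<in> M n" for a b
  proof -
    obtain b' where b': "b' \<in> M n" "e n * (b * m) = e n * b'"
      using e_mult_absorb[OF n, of "b * m"] m M_Suc[OF ab(2)] by auto
    then show ?thesis using Xideal_Suc_generator[OF n ab(1) b'(1)] by (simp add: mult.assoc)
  qed
  then show ?thesis
    using x unfolding Xideal_Suc[OF n]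
    by (elim finsums_additive_image) (auto simp: distrib_right)
qed

lemma Xideal_Suc_cscale:
  assumes n: "n \<ge> 1" and x: "x \<in> X (Suc n)"
  shows "cscale c x \<in> X (Suc n)"
proof -
  have "cscale c (a * e n * b) \<in> X (Suc n)" if "a \<in> M n" "b \<in> M n" for a b
    using Xideal_Suc_generator[OF n, of "cscale c a" b] that by (simp add: mult_cscale_left)
  then show ?thesis
    using x unfolding Xideal_Suc[OF n]
    by (elim finsums_additive_image) (auto simp: cscale_add_right)
qed

lemma Xideal_Suc_astar:
  assumes n: "n \<ge> 1" and x: "x \<in> X (Suc n)"
  shows "astar x \<in> X (Suc n)"
proof -
  have "astar (a * e n * b) \<in> X (Suc n)" if "a \<in> M n" "b \<in> M n" for a b
    using Xideal_Suc_generator[OF n, of "astar b" "astar a"] that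
    by (simp add: astar_mult e_self_adjoint[OF n] mult.assoc)
  then show ?thesis
    using x unfolding Xideal_Suc[OF n]
    by (elim finsums_additive_image) (auto simp: astar_add)
qed

lemma Xideal_trivial: "k \<le> 1 \<Longrightarrow> X k = {0}"
  unfolding Xideal_def by simp

lemma star_ideal_Xideal: "star_ideal (M k) (X k)"
proof (cases "k \<le> 1")
  case True
  then show ?thesis by (simp add: Xideal_trivial star_ideal_def)
next
  case False
  then obtain n where k: "k = Suc n" and n: "n \<ge> 1" by (cases k) auto
  show ?thesis
    unfolding star_ideal_def k
  proof (intro conjI ballI allI)
    show "X (Suc n) \<subseteq> M (Suc n)" by (rule Xideal_Suc_subset[OF n])
    show "0 \<in> X (Suc n)" by (simp add: Xideal_Suc[OF n])
    show "x + y \<in> X (Suc n)" if "x \<in> X (Suc n)" "y \<in> X (Suc n)" for x y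
      using that unfolding Xideal_Suc[OF n] by (rule finsums_add)
  qed (simp_all add: Xideal_Suc_cscale[OF n] Xideal_Suc_mult_left[OF n]
      Xideal_Suc_mult_right[OF n] Xideal_Suc_astar[OF n])
qed


lemma Xideal_subset: "X k \<subseteq> M k"
  and Xideal_zero: "0 \<in> X k"
  and Xideal_add: "x \<in> X k \<Longrightarrow> y \<in> X k \<Longrightarrow> x + y \<in> X k"
  and Xideal_cscale: "x \<in> X k \<Longrightarrow> cscale c x \<in> X k"
  and Xideal_astar: "x \<in> X k \<Longrightarrow> astar x \<in> X k"
  using star_ideal_Xideal[of k] unfolding star_ideal_def by blast+

lemma Xideal_finite_span: "\<exists>S. finite S \<and> S \<subseteq> X k \<and> X k \<subseteq> clin_span S"
proof (cases "k \<le> 1")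
  case True
  then show ?thesis by (intro exI[of _ "{}"]) (simp add: Xideal_trivial)
next
  case False
  then obtain n where k: "k = Suc n" and n: "n \<ge> 1" by (cases k) auto
  obtain B where B: "finite B" "B \<subseteq> M n" "M n = clin_span B"
    using fd_star_subalgebra.finite_span[OF star_subalgebra_M] by blast
  define S where "S = (\<lambda>(a, b). a * e n * b) ` (B \<times> B)"
  have "finite S" using B(1) by (simp add: S_def)
  moreover have "S \<subseteq> X k" using B(2) Xideal_Suc_generator[OF n] by (auto simp: S_def k)
  moreover have "X k \<subseteq> clin_span S"
    unfolding k Xideal_Suc[OF n]
    using clin_span_sandwich[of _ B _ "e n"] B(3)
    by (intro finsums_least) (auto simp: S_def intro: clin_span_add)
  ultimately show ?thesis by blast
qed

lemma Xideal_direct_sum: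
  assumes "m \<in> M k"
  shows "\<exists>!p. fst p \<in> X k \<and> snd p \<in> Y k \<and> m = fst p + snd p"
proof -
  obtain S where "finite S" "S \<subseteq> X k" "X k \<subseteq> clin_span S" using Xideal_finite_span by blast
  then obtain z where "z \<in> X k" "\<forall>x\<in>X k. z * x = x \<and> x * z = x"
    using tracial_algebra.star_ideal_has_unit[OF tracial_M star_ideal_Xideal] by blast
  then show ?thesis
    using fd_star_subalgebra.star_ideal_unit_decomposition[OF star_subalgebra_M star_ideal_Xideal
        _ _ assms]
    unfolding Ycompl_def by blast
qed

section \<open>The basic construction\<close>

text \<open>d^2 E_(n+1) (x \<xi> e_n) is the unique \<eta> \<in> M_n with x \<xi> e_n = \<eta> e_n, so this is the
  action of M_(n+1) on L2(M_n) identified with M_n e_n, extended by 0 off M_n as in lmult.\<close>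
definition jones_rep :: "nat \<Rightarrow> 'a \<Rightarrow> 'a \<Rightarrow> 'a" where
  "jones_rep n x = (\<lambda>\<xi>. if \<xi> \<in> M n then cscale D (E (Suc n) (x * \<xi> * e n)) else 0)"

lemma jones_rep_outside: "\<xi> \<notin> M n \<Longrightarrow> jones_rep n x \<xi> = 0"
  and jones_rep_zero: "jones_rep n x 0 = 0"
  by (simp_all add: jones_rep_def)

lemma jones_rep_mem_mult_e:
  assumes n: "n \<ge> 1" and x: "x \<in> M (Suc n)" and \<xi>: "\<xi> \<in> M n"
  shows "jones_rep n x \<xi> \<in> M n" "x * \<xi> * e n = jones_rep n x \<xi> * e n"
  using condexp_mult_e_representative[OF n, of "x * \<xi>"] x M_Suc[OF \<xi>] \<xi>
  by (simp_all add: jones_rep_def)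

lemma jones_rep_eqI:
  assumes n: "n \<ge> 1" and x: "x \<in> M (Suc n)" and \<xi>: "\<xi> \<in> M n"
    and \<eta>: "\<eta> \<in> M n" "x * \<xi> * e n = \<eta> * e n"
  shows "jones_rep n x \<xi> = \<eta>"
  using inj_onD[OF inj_on_mult_e[OF n]] jones_rep_mem_mult_e[OF n x \<xi>] \<eta> by metis

lemma jones_rep_basic:
  assumes n: "n \<ge> 1" and a: "a \<in> M n" and b: "b \<in> M n"
  shows "jones_rep n (a * e n * b) = lmult M n a \<circ> jones_proj M tr n \<circ> lmult M n b"
proof (rule ext)
  fix \<xi>
  show "jones_rep n (a * e n * b) \<xi> = (lmult M n a \<circ> jones_proj M tr n \<circ> lmult M n b) \<xi>"
  proof (cases "\<xi> \<in> M n")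
    case True
    have b\<xi>: "b * \<xi> \<in> M n" using b True by simp
    have E: "E n (b * \<xi>) \<in> M n" using M_pred[OF condexp_mem[OF b\<xi>]] .
    have "a * e n * b * \<xi> * e n = a * E n (b * \<xi>) * e n"
      using e_compress[OF n b\<xi>] by (simp add: mult.assoc)
    then have "jones_rep n (a * e n * b) \<xi> = a * E n (b * \<xi>)"
      using subsetD[OF Xideal_subset Xideal_Suc_generator[OF n a b]] True a E
      by (intro jones_rep_eqI[OF n]) simp_all
    then show ?thesis using True b\<xi> E by (simp add: lmult_def jones_proj_def)
  qed (simp add: jones_rep_outside lmult_def jones_proj_def)
qed

lemma jones_rep_add:
  assumes n: "n \<ge> 1" and x: "x \<in> M (Suc n)" and y: "y \<in> M (Suc n)"
  shows "jones_rep n (x + y) = (\<lambda>\<xi>. jones_rep n x \<xi> + jones_rep n y \<xi>)"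
proof (rule ext)
  fix \<xi>
  show "jones_rep n (x + y) \<xi> = jones_rep n x \<xi> + jones_rep n y \<xi>"
  proof (cases "\<xi> \<in> M n")
    case True
    then show ?thesis
      using jones_rep_mem_mult_e[OF n x True] jones_rep_mem_mult_e[OF n y True] x y
      by (intro jones_rep_eqI[OF n]) (simp_all add: distrib_right)
  qed (simp add: jones_rep_outside)
qed

lemma jones_rep_cscale:
  assumes n: "n \<ge> 1" and x: "x \<in> M (Suc n)"
  shows "jones_rep n (cscale c x) = (\<lambda>\<xi>. cscale c (jones_rep n x \<xi>))"
proof (rule ext)
  fix \<xi>
  show "jones_rep n (cscale c x) \<xi> = cscale c (jones_rep n x \<xi>)"
  proof (cases "\<xi> \<in> M n")
    case True
    then show ?thesis
      using jones_rep_mem_mult_e[OF n x True] x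
      by (intro jones_rep_eqI[OF n]) (simp_all add: mult_cscale_left)
  qed (simp add: jones_rep_outside)
qed

lemma jones_rep_mult:
  assumes n: "n \<ge> 1" and x: "x \<in> M (Suc n)" and y: "y \<in> M (Suc n)"
  shows "jones_rep n (x * y) = jones_rep n x \<circ> jones_rep n y"
proof (rule ext)
  fix \<xi>
  show "jones_rep n (x * y) \<xi> = (jones_rep n x \<circ> jones_rep n y) \<xi>"
  proof (cases "\<xi> \<in> M n")
    case True
    note y\<xi> = jones_rep_mem_mult_e[OF n y True]
    show ?thesis
      using y\<xi> jones_rep_mem_mult_e[OF n x y\<xi>(1)] x y True
      by (intro jones_rep_eqI[OF n]) (simp_all add: mult.assoc)
  qed (simp add: jones_rep_outside jones_rep_zero)
qed

lemma jones_rep_sum: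
  assumes n: "n \<ge> 1" and ab: "\<forall>i<m. a i \<in> M n \<and> b i \<in> M n"
  shows "jones_rep n (\<Sum>i<m. a i * e n * b i) = basic_op M tr n m a b"
  using ab
proof (induction m)
  case 0
  show ?case by (simp add: basic_op_def jones_rep_def fun_eq_iff)
next
  case (Suc m)
  have "a i * e n * b i \<in> M (Suc n)" if "i < Suc m" for i
    using subsetD[OF Xideal_subset Xideal_Suc_generator[OF n]] Suc.prems that by blast
  then have in_M: "(\<Sum>i<m. a i * e n * b i) \<in> M (Suc n)" "a m * e n * b m \<in> M (Suc n)"
    by (auto intro: fd_star_subalgebra.sum_mem[OF star_subalgebra_M])
  show ?case
    using Suc jones_rep_add[OF n in_M] jones_rep_basic[OF n, of "a m" "b m"]
    by (simp add: basic_op_def fun_eq_iff)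
qed

lemma jones_rep_image:
  assumes n: "n \<ge> 1"
  shows "jones_rep n ` X (Suc n) = basic_constr M tr n"
proof (intro set_eqI iffI)
  fix T assume "T \<in> jones_rep n ` X (Suc n)"
  then obtain m :: nat and a b where "\<forall>i<m. a i \<in> M n \<and> b i \<in> M n"
    and "T = jones_rep n (\<Sum>i<m. a i * e n * b i)"
    unfolding Xideal_Suc_sums[OF n] by blast
  then show "T \<in> basic_constr M tr n"
    unfolding basic_constr_def using jones_rep_sum[OF n] by blast
next
  fix T assume "T \<in> basic_constr M tr n"
  then obtain m a b where ab: "\<forall>i<m. a i \<in> M n \<and> b i \<in> M n" and "T = basic_op M tr n m a b"
    unfolding basic_constr_def by blast
  then have "T = jones_rep n (\<Sum>i<m. a i * e n * b i)" using jones_rep_sum[OF n ab] by simp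
  moreover have "(\<Sum>i<m. a i * e n * b i) \<in> X (Suc n)"
    unfolding Xideal_Suc_sums[OF n] using ab by blast
  ultimately show "T \<in> jones_rep n ` X (Suc n)" by blast
qed


lemma jones_rep_eq_zero:
  assumes n: "n \<ge> 1" and u: "u \<in> X (Suc n)" and zero: "jones_rep n u = (\<lambda>_. 0)"
  shows "u = 0"
proof -
  have uM: "u \<in> M (Suc n)" using u Xideal_subset by blast
  have "u * (a * e n * b) = 0" if a: "a \<in> M n" for a b
  proof -
    have "u * a * e n = 0" using jones_rep_mem_mult_e(2)[OF n uM a] zero by simp
    then show ?thesis by (metis mult.assoc mult_zero_left)
  qed
  then have "X (Suc n) \<subseteq> {v. u * v = 0}"
    unfolding Xideal_Suc[OF n] by (intro finsums_least) (auto simp: distrib_left)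
  then have "u * astar u = 0" using Xideal_astar[OF u] by blast
  then have "tr (Suc n) (astar u * u) = 0" using tr_commute[of "astar u" "Suc n" u] uM tr_zero by simp
  then show ?thesis using tr_faithful uM by blast
qed

lemma inj_on_jones_rep:
  assumes n: "n \<ge> 1"
  shows "inj_on (jones_rep n) (X (Suc n))"
proof (rule inj_onI)
  fix x y assume x: "x \<in> X (Suc n)" and y: "y \<in> X (Suc n)" and eq: "jones_rep n x = jones_rep n y"
  have yM: "y \<in> M (Suc n)" using y Xideal_subset by blast
  have M: "x \<in> M (Suc n)" "cscale (-1) y \<in> M (Suc n)" using x yM Xideal_subset by auto
  have "jones_rep n (x + cscale (-1) y) = (\<lambda>\<xi>. jones_rep n x \<xi> + cscale (-1) (jones_rep n y \<xi>))"
    using jones_rep_add[OF n M] jones_rep_cscale[OF n yM] by simp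
  also have "\<dots> = (\<lambda>_. 0)" using eq by (simp add: cscale_minus_one)
  finally have "x + cscale (-1) y = 0"
    using jones_rep_eq_zero[OF n] Xideal_add[OF x Xideal_cscale[OF y]] by blast
  then show "x = y" by (simp add: cscale_minus_one)
qed

lemma trace_jones_rep:
  assumes n: "n \<ge> 1" and x: "x \<in> M (Suc n)" and \<xi>: "\<xi> \<in> M n" and \<eta>: "\<eta> \<in> M n"
  shows "tr n (astar \<eta> * jones_rep n x \<xi>) = D * tr (Suc n) (astar \<eta> * x * \<xi> * e n)"
proof -
  note r = jones_rep_mem_mult_e[OF n x \<xi>]
  have "tr (Suc n) (astar \<eta> * x * \<xi> * e n) = tr (Suc n) (astar \<eta> * jones_rep n x \<xi> * e n)"
    using r(2) by (simp add: mult.assoc)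
  also have "\<dots> = \<delta> * tr n (astar \<eta> * jones_rep n x \<xi>)" using trace_mult_e[OF n] r(1) \<eta> by simp
  finally show ?thesis using d_pos by simp
qed

lemma jones_rep_adjoint:
  assumes n: "n \<ge> 1" and x: "x \<in> M (Suc n)" and \<xi>: "\<xi> \<in> M n" and \<eta>: "\<eta> \<in> M n"
  shows "l2_inner tr n (jones_rep n x \<xi>) \<eta> = l2_inner tr n \<xi> (jones_rep n (astar x) \<eta>)"
proof -
  have xs: "astar x \<in> M (Suc n)" using x by simp
  have in_M: "\<xi> \<in> M (Suc n)" "\<eta> \<in> M (Suc n)" "e n \<in> M (Suc n)" using M_Suc \<xi> \<eta> e_mem[OF n] by auto
  have "l2_inner tr n \<xi> (jones_rep n (astar x) \<eta>) = cnj (tr n (astar \<xi> * jones_rep n (astar x) \<eta>))"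
    using tr_astar[of "astar \<xi> * jones_rep n (astar x) \<eta>" n] jones_rep_mem_mult_e(1)[OF n xs \<eta>] \<xi>
    by (simp add: l2_inner_def astar_mult astar_astar)
  also have "\<dots> = D * cnj (tr (Suc n) (astar \<xi> * astar x * \<eta> * e n))"
    using trace_jones_rep[OF n xs \<eta> \<xi>] by simp
  also have "cnj (tr (Suc n) (astar \<xi> * astar x * \<eta> * e n)) = tr (Suc n) (e n * (astar \<eta> * x * \<xi>))"
    using tr_astar[of "astar \<xi> * astar x * \<eta> * e n" "Suc n"] in_M xs
    by (simp add: astar_mult astar_astar e_self_adjoint[OF n] mult.assoc)
  also have "\<dots> = tr (Suc n) (astar \<eta> * x * \<xi> * e n)"
    using tr_commute[of "e n" "Suc n" "astar \<eta> * x * \<xi>"] in_M x by simp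
  finally show ?thesis
    using trace_jones_rep[OF n x \<xi> \<eta>] by (simp add: l2_inner_def)
qed

lemma trace_sum_mult_e:
  assumes n: "n \<ge> 1" and ab: "\<forall>i<m. a i \<in> M n \<and> b i \<in> M n"
  shows "D * tr (Suc n) (\<Sum>i<m. a i * e n * b i) = (\<Sum>i<m. tr n (a i * b i))"
proof -
  have summand: "tr (Suc n) (a i * e n * b i) = \<delta> * tr n (a i * b i)" if i: "i < m" for i
  proof -
    have a: "a i \<in> M n" and b: "b i \<in> M n" using ab i by auto
    have "tr (Suc n) (a i * e n * b i) = tr (Suc n) (b i * a i * e n)"
      using tr_commute[of "a i * e n" "Suc n" "b i"] M_Suc[OF a] M_Suc[OF b] e_mem[OF n]
      by (simp add: mult.assoc)
    also have "\<dots> = \<delta> * tr n (b i * a i)" using trace_mult_e[OF n] a b by simp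
    finally show ?thesis using tr_commute a b by simp
  qed
  have "tr (Suc n) (\<Sum>i<m. a i * e n * b i) = (\<Sum>i<m. \<delta> * tr n (a i * b i))"
    using tr_sum[of "{..<m}" "\<lambda>i. a i * e n * b i" "Suc n"] ab M_Suc e_mem[OF n] summand by simp
  then show ?thesis using d_pos by (simp add: sum_divide_distrib[symmetric])
qed

lemma basic_trace_jones_rep:
  assumes n: "n \<ge> 1" and x: "x \<in> X (Suc n)"
  shows "basic_trace M tr n (jones_rep n x) = D * tr (Suc n) x"
  unfolding basic_trace_def
proof (rule the_equality)
  obtain m :: nat and a b where ab: "\<forall>i<m. a i \<in> M n \<and> b i \<in> M n"
    and x_sum: "x = (\<Sum>i<m. a i * e n * b i)"
    using x unfolding Xideal_Suc_sums[OF n] by blast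
  show "\<exists>(m::nat) a b. (\<forall>i<m. a i \<in> M n \<and> b i \<in> M n) \<and> jones_rep n x = basic_op M tr n m a b \<and>
      D * tr (Suc n) x = (\<Sum>i<m. tr n (a i * b i))"
    using ab jones_rep_sum[OF n ab] trace_sum_mult_e[OF n ab] x_sum by blast
next
  fix c assume "\<exists>(m::nat) a b. (\<forall>i<m. a i \<in> M n \<and> b i \<in> M n) \<and>
      jones_rep n x = basic_op M tr n m a b \<and> c = (\<Sum>i<m. tr n (a i * b i))"
  then obtain m :: nat and a b where ab: "\<forall>i<m. a i \<in> M n \<and> b i \<in> M n"
    and rep: "jones_rep n x = basic_op M tr n m a b" and c: "c = (\<Sum>i<m. tr n (a i * b i))"
    by blast
  have sum_X: "(\<Sum>i<m. a i * e n * b i) \<in> X (Suc n)" unfolding Xideal_Suc_sums[OF n] using ab by blast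
  have "x = (\<Sum>i<m. a i * e n * b i)"
    using inj_onD[OF inj_on_jones_rep[OF n] _ x sum_X] rep jones_rep_sum[OF n ab] by simp
  then show "c = D * tr (Suc n) x" using c trace_sum_mult_e[OF n ab] by simp
qed


lemma basic_construction_iso:
  assumes n: "n \<ge> 1"
  shows "\<exists>\<Phi>. bij_betw \<Phi> (X (Suc n)) (basic_constr M tr n) \<and>
    (\<forall>a\<in>M n. \<forall>b\<in>M n. \<Phi> (a * e n * b) = lmult M n a \<circ> jones_proj M tr n \<circ> lmult M n b) \<and>
    (\<forall>x\<in>X (Suc n). \<forall>y\<in>X (Suc n).
       \<Phi> (x + y) = (\<lambda>\<xi>. \<Phi> x \<xi> + \<Phi> y \<xi>) \<and> \<Phi> (x * y) = \<Phi> x \<circ> \<Phi> y) \<and>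
    (\<forall>c. \<forall>x\<in>X (Suc n). \<Phi> (cscale c x) = (\<lambda>\<xi>. cscale c (\<Phi> x \<xi>))) \<and>
    (\<forall>x\<in>X (Suc n). \<forall>\<xi>\<in>M n. \<forall>\<eta>\<in>M n.
       l2_inner tr n (\<Phi> x \<xi>) \<eta> = l2_inner tr n \<xi> (\<Phi> (astar x) \<eta>)) \<and>
    (\<forall>x\<in>X (Suc n). basic_trace M tr n (\<Phi> x) = D * tr (Suc n) x)"
proof -
  have XM: "\<And>x. x \<in> X (Suc n) \<Longrightarrow> x \<in> M (Suc n)" using Xideal_subset by blast
  show ?thesis
    using inj_on_jones_rep[OF n] jones_rep_image[OF n] jones_rep_basic[OF n]
      jones_rep_add[OF n XM XM] jones_rep_mult[OF n XM XM] jones_rep_cscale[OF n XM]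
      jones_rep_adjoint[OF n XM] basic_trace_jones_rep[OF n]
    by (intro exI[of _ "jones_rep n"] conjI ballI allI) (simp_all add: bij_betw_def)
qed

section \<open>The complements Y_k\<close>

lemma Xideal_mono: "X k \<subseteq> X (Suc k)"
proof (cases "k \<le> 1")
  case True
  then show ?thesis using Xideal_zero by (simp add: Xideal_trivial)
next
  case False
  then obtain n where k: "k = Suc n" and n: "n \<ge> 1" by (cases k) auto
  have "a * e n * b \<in> X (Suc k)" if a: "a \<in> M n" and b: "b \<in> M n" for a b
  proof -
    have in_M: "a * e n \<in> M (Suc n)" "e n * b \<in> M (Suc n)"
      using M_Suc[OF a] M_Suc[OF b] e_mem[OF n] by simp_all
    have "(a * e n) * e (Suc n) * (e n * b) = a * (e n * e (Suc n) * e n) * b"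
      by (simp add: mult.assoc)
    also have "\<dots> = cscale \<delta> (a * e n * b)"
      by (simp add: e_e_Suc_e[OF n] mult_cscale_left mult_cscale_right)
    finally have "a * e n * b = cscale D ((a * e n) * e (Suc n) * (e n * b))" by simp
    then show ?thesis
      using Xideal_cscale[OF Xideal_Suc_generator[of "Suc n", OF _ in_M]] k by simp
  qed
  then show ?thesis
    unfolding k Xideal_Suc[OF n] using Xideal_zero Xideal_add
    by (intro finsums_least) auto
qed

lemma Ycompl_mult_Xideal: "y \<in> Y (Suc n) \<Longrightarrow> x \<in> X n \<Longrightarrow> y * x = 0"
  using Xideal_mono unfolding Ycompl_def by blast

lemma condexp_Ycompl: "E (Suc n) ` Y (Suc n) \<subseteq> Y n"
proof
  fix z assume "z \<in> E (Suc n) ` Y (Suc n)"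
  then obtain y where y: "y \<in> Y (Suc n)" and z: "z = E (Suc n) y" by blast
  have yM: "y \<in> M (Suc n)" using y unfolding Ycompl_def by blast
  have "x * z = 0 \<and> z * x = 0" if x: "x \<in> X n" for x
  proof -
    have "x \<in> M n" using x Xideal_subset by blast
    moreover have "x * y = 0" "y * x = 0" using y x Xideal_mono unfolding Ycompl_def by blast+
    ultimately show ?thesis
      using condexp_mult_left[of x "Suc n" y] condexp_mult_right[of x "Suc n" y] yM z by simp
  qed
  then show "z \<in> Y n" using condexp_mem[OF yM] z unfolding Ycompl_def by simp
qed

lemma Ycompl_Suc_trivial:
  assumes Y: "Y k = {0}"
  shows "Y (Suc k) = {0}"
proof -
  have "y = 0" if y: "y \<in> Y (Suc k)" for y
  proof -
    have yM: "y \<in> M (Suc k)" using y unfolding Ycompl_def by blast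
    have "x * (astar y * y) = 0 \<and> (astar y * y) * x = 0" if x: "x \<in> X (Suc k)" for x
    proof -
      have "y * astar x = 0" "y * x = 0" using y x Xideal_astar unfolding Ycompl_def by blast+
      then have "x * astar y = 0" by (metis astar_astar astar_mult astar_zero)
      then show ?thesis using \<open>y * x = 0\<close> by (simp add: mult.assoc flip: mult.assoc[of x])
    qed
    then have "astar y * y \<in> Y (Suc k)" using yM unfolding Ycompl_def by simp
    then have "E (Suc k) (astar y * y) = 0" using condexp_Ycompl Y by blast
    then have "tr (Suc k) (astar y * y) = 0" using trace_condexp[of "astar y * y" "Suc k"] yM by (simp add: tr_zero)
    then show ?thesis using tr_faithful yM by blast
  qed
  moreover have "0 \<in> Y (Suc k)" unfolding Ycompl_def by simp
  ultimately show ?thesis by blast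
qed

lemma Ycompl_trivial_from:
  assumes "Y n = {0}" "n \<le> k"
  shows "Y k = {0}"
  using assms(2) by (induction k rule: dec_induct) (simp_all add: assms(1) Ycompl_Suc_trivial)

end

theorem mainTheorem4:
  fixes M :: "nat \<Rightarrow> 'a::complex_star_algebra set"
    and tr :: "nat \<Rightarrow> 'a \<Rightarrow> complex"
    and e :: "nat \<Rightarrow> 'a"
    and d :: real
    and n :: nat
  assumes tower: "markov_tower M tr e d"
    and n1: "n \<ge> 1"
  shows
   "\<comment> \<open>(1)\<close>
    inj_on (\<lambda>y. y * e n) (M n) \<and>
    \<comment> \<open>(2)\<close>
    (\<forall>x\<in>M (Suc n).
       cscale (complex_of_real (d\<^sup>2)) (condexp M tr (Suc n) (x * e n)) \<in> M n \<and>
       x * e n = cscale (complex_of_real (d\<^sup>2)) (condexp M tr (Suc n) (x * e n)) * e n \<and>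
       (\<forall>y\<in>M n. x * e n = y * e n \<longrightarrow>
          y = cscale (complex_of_real (d\<^sup>2)) (condexp M tr (Suc n) (x * e n)))) \<and>
    \<comment> \<open>(3)\<close>
    (\<forall>x\<in>M n. tr (Suc n) (x * e n) = complex_of_real (1 / d\<^sup>2) * tr n x) \<and>
    \<comment> \<open>(4)\<close>
    {e n * x * e n | x. x \<in> M (Suc n)} = {y * e n | y. y \<in> M (n - 1)} \<and>
    \<comment> \<open>(5)\<close>
    (Xideal M e (Suc n) \<subseteq> M (Suc n) \<and>
     (\<forall>x\<in>Xideal M e (Suc n). \<forall>y\<in>Xideal M e (Suc n). x + y \<in> Xideal M e (Suc n)) \<and>
     (\<forall>c. \<forall>x\<in>Xideal M e (Suc n). cscale c x \<in> Xideal M e (Suc n)) \<and>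
     (\<forall>x\<in>Xideal M e (Suc n). \<forall>m\<in>M (Suc n).
        m * x \<in> Xideal M e (Suc n) \<and> x * m \<in> Xideal M e (Suc n)) \<and>
     (\<forall>x\<in>Xideal M e (Suc n). astar x \<in> Xideal M e (Suc n)) \<and>
     (\<forall>m\<in>M (Suc n). \<exists>!p. fst p \<in> Xideal M e (Suc n) \<and> snd p \<in> Ycompl M e (Suc n) \<and>
                          m = fst p + snd p)) \<and>
    \<comment> \<open>(6) and (7)\<close>
    (\<exists>\<Phi>. bij_betw \<Phi> (Xideal M e (Suc n)) (basic_constr M tr n) \<and>
        (\<forall>a\<in>M n. \<forall>b\<in>M n.
           \<Phi> (a * e n * b) = lmult M n a \<circ> jones_proj M tr n \<circ> lmult M n b) \<and>
        (\<forall>x\<in>Xideal M e (Suc n). \<forall>y\<in>Xideal M e (Suc n).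
           \<Phi> (x + y) = (\<lambda>\<xi>. \<Phi> x \<xi> + \<Phi> y \<xi>) \<and> \<Phi> (x * y) = \<Phi> x \<circ> \<Phi> y) \<and>
        (\<forall>c. \<forall>x\<in>Xideal M e (Suc n). \<Phi> (cscale c x) = (\<lambda>\<xi>. cscale c (\<Phi> x \<xi>))) \<and>
        (\<forall>x\<in>Xideal M e (Suc n). \<forall>\<xi>\<in>M n. \<forall>\<eta>\<in>M n.
           l2_inner tr n (\<Phi> x \<xi>) \<eta> = l2_inner tr n \<xi> (\<Phi> (astar x) \<eta>)) \<and>
        (\<forall>x\<in>Xideal M e (Suc n).
           basic_trace M tr n (\<Phi> x) = complex_of_real (d\<^sup>2) * tr (Suc n) x)) \<and>
    \<comment> \<open>(8)\<close>
    (\<forall>y\<in>Ycompl M e (Suc n). \<forall>x\<in>Xideal M e n. y * x = 0) \<and>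
    condexp M tr (Suc n) ` Ycompl M e (Suc n) \<subseteq> Ycompl M e n \<and>
    \<comment> \<open>(9)\<close>
    (Ycompl M e n = {0} \<longrightarrow> (\<forall>k\<ge>n. Ycompl M e k = {0}))"
proof -
  interpret markov_tower_setting M tr e d using tower by unfold_locales
  have ideal: "star_ideal (M (Suc n)) (X (Suc n))" by (rule star_ideal_Xideal)
  show ?thesis
    using inj_on_mult_e[OF n1] condexp_mult_e_representative[OF n1] trace_mult_e[OF n1]
      e_compress_eq[OF n1] ideal[unfolded star_ideal_def] Xideal_direct_sum
      basic_construction_iso[OF n1] Ycompl_mult_Xideal condexp_Ycompl Ycompl_trivial_from
    by (intro conjI ballI impI allI) auto
qed

end
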